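(* Let $P_1=(X_1,Y_1)\neq(0,0)$ be a rational point of the plane with $Y_1\neq 0$, let $O=(0,0)$, and put $N=X_1^2+Y_1^2$. A point $P=(X,Y)$ of the plane is a rational point lying on the perpendicular bisector of the segment $OP_1$ and at rational distance from $O$ (equivalently, $P$ is the apex of a triangle in $\mathcal R$) if and only if there exist $t\in\mathbb{Q}$ with $t^2N\neq 4$ and a sign $\varepsilon\in\{+1,-1\}$ such that $$X=\frac{X_1}{2}+\varepsilon\,\frac{t^2X_1N-4tN+4X_1}{2(t^2N-4)},\qquad Y=\frac{Y_1}{2}+\varepsilon\,\frac{X_1\bigl(4tN-t^2X_1N-4X_1\bigr)}{2Y_1(t^2N-4)} .$$ In that case $|OP|=|PP_1|=|R|$, where $$R=\frac{(tN-2X_1)^2+4Y_1^2}{2t^2Y_1N-8Y_1}.$$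
   Context: A rational point of the plane is a point with rational coordinates; a rational triangle is one whose three side lengths are rational. For a fixed rational point $P_1\neq O$, $\mathcal R$ denotes the set of rational isosceles triangles $\triangle OPP_1$ with base $OP_1$, with $P$ a rational point and $|OP|=|PP_1|$; such a triangle is determined by its apex $P$, which lies on the perpendicular bisector $y=-\frac{X_1}{Y_1}x+\frac{X_1^2+Y_1^2}{2Y_1}$ of $OP_1$. *)

theory Defs
  imports Complex_Main
begin

end

theory Submission
  imports Defs
begin

text \<open>Write a point of the perpendicular bisector of \<open>OP\<^sub>1\<close> as \<open>(X\<^sub>1/2 + a, Y\<^sub>1/2 - X\<^sub>1 a/Y\<^sub>1)\<close>.
  Its squared distance to \<open>O\<close> and to \<open>P\<^sub>1\<close> is \<open>N(Y\<^sub>1\<^sup>2 + u\<^sup>2)/(4Y\<^sub>1\<^sup>2)\<close> with \<open>u = 2a\<close>, so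
  for rational \<open>a\<close> the distance is rational exactly when \<open>(u, w)\<close> is a rational point of
  the conic \<open>w\<^sup>2 = N(Y\<^sub>1\<^sup>2 + u\<^sup>2)\<close>. This conic has the rational point \<open>(X\<^sub>1, N)\<close>, and
  the chords through it with rational slope \<open>tN/2\<close> cut out all its other rational points;
  this gives the stated parametrisation, the sign \<open>\<epsilon>\<close> accounting for the symmetry
  \<open>u \<mapsto> -u\<close>.\<close>

definition bisector_shift :: "real \<Rightarrow> real \<Rightarrow> real \<Rightarrow> real" where
  "bisector_shift X1 N t = (t^2 * X1 * N - 4 * t * N + 4 * X1) / (2 * (t^2 * N - 4))"

definition apex_radius :: "real \<Rightarrow> real \<Rightarrow> real \<Rightarrow> real \<Rightarrow> real" where
  "apex_radius X1 Y1 N t = ((t * N - 2 * X1)^2 + 4 * Y1^2) / (2 * t^2 * Y1 * N - 8 * Y1)"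

lemma perpendicular_bisector_eq:
  fixes X1 Y1 X Y :: real
  assumes "Y1 \<noteq> 0"
  shows "Y = - (X1 / Y1) * X + (X1^2 + Y1^2) / (2 * Y1) \<longleftrightarrow> Y = Y1 / 2 - X1 * (X - X1 / 2) / Y1"
proof -
  have "2 * Y1 * (- (X1 / Y1) * X + (X1^2 + Y1^2) / (2 * Y1)) = X1^2 + Y1^2 - 2 * X1 * X"
    using assms by (simp add: field_simps)
  then have "Y = - (X1 / Y1) * X + (X1^2 + Y1^2) / (2 * Y1) \<longleftrightarrow> 2 * Y1 * Y = X1^2 + Y1^2 - 2 * X1 * X"
    using assms by (metis mult_cancel_left mult_eq_0_iff zero_neq_numeral)
  also have "\<dots> \<longleftrightarrow> Y = Y1 / 2 - X1 * (X - X1 / 2) / Y1"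
    using assms by (auto simp: field_simps power2_eq_square)
  finally show ?thesis .
qed

lemma bisector_point_dist_sq:
  fixes X1 Y1 X Y a :: real
  assumes "Y1 \<noteq> 0" "X = X1 / 2 + a" "Y = Y1 / 2 - X1 * a / Y1"
  shows "X^2 + Y^2 = (X1^2 + Y1^2) * (Y1^2 + 4 * a^2) / (4 * Y1^2)"
    and "(X - X1)^2 + (Y - Y1)^2 = (X1^2 + Y1^2) * (Y1^2 + 4 * a^2) / (4 * Y1^2)"
  using assms by (simp_all add: field_simps power2_eq_square, algebra+)

lemma bisector_shift_conic_identity:
  fixes X1 Y1 N t :: real
  assumes "N = X1^2 + Y1^2"
  shows "N * (Y1^2 * (t^2 * N - 4)^2 + (t^2 * X1 * N - 4 * t * N + 4 * X1)^2)
           = ((t * N - 2 * X1)^2 + 4 * Y1^2)^2"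
  unfolding assms by algebra

lemma dist_sq_bisector_shift:
  fixes X1 Y1 N t \<epsilon> :: real
  assumes "Y1 \<noteq> 0" "N = X1^2 + Y1^2" "t^2 * N \<noteq> 4" "\<epsilon>^2 = 1"
  shows "N * (Y1^2 + 4 * (\<epsilon> * bisector_shift X1 N t)^2) / (4 * Y1^2) = (apex_radius X1 Y1 N t)^2"
proof -
  define D where "D = t^2 * N - 4"
  define A where "A = t^2 * X1 * N - 4 * t * N + 4 * X1"
  have "D \<noteq> 0" using assms(3) by (simp add: D_def)
  have "N * (Y1^2 + 4 * (\<epsilon> * bisector_shift X1 N t)^2) / (4 * Y1^2)
          = N * (Y1^2 * D^2 + A^2) / (4 * Y1^2 * D^2)"
    using \<open>D \<noteq> 0\<close> assms(1,4)
    by (simp add: bisector_shift_def flip: A_def D_def) (simp add: field_simps power_mult_distrib)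
  also have "\<dots> = ((t * N - 2 * X1)^2 + 4 * Y1^2)^2 / (2 * Y1 * D)^2"
    using bisector_shift_conic_identity[OF assms(2), of t]
    by (simp add: A_def D_def power_mult_distrib)
  also have "\<dots> = (apex_radius X1 Y1 N t)^2"
    by (simp add: apex_radius_def D_def power_divide algebra_simps)
  finally show ?thesis .
qed

lemma bisector_shift_of_root:
  fixes X1 Y1 N a t :: real
  assumes "Y1 \<noteq> 0" "N = X1^2 + Y1^2"
    and root: "N * (2 * a - X1) * t^2 + 4 * N * t - 8 * a - 4 * X1 = 0"
  shows "t^2 * N \<noteq> 4" and "a = bisector_shift X1 N t"
proof -
  have "N > 0"
    using assms(1,2) by (simp add: add_nonneg_pos)
  show "t^2 * N \<noteq> 4"
  proof
    assume "t^2 * N = 4"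
    moreover have "N * (2 * a - X1) * t^2 = (2 * a - X1) * (t^2 * N)"
      by (simp add: algebra_simps)
    ultimately have "4 * N * t = 8 * X1" using root by simp
    then have "t = 2 * X1 / N" using \<open>N > 0\<close> by (simp add: field_simps)
    with \<open>t^2 * N = 4\<close> \<open>N > 0\<close> have "X1^2 = N" by (simp add: field_simps power2_eq_square)
    with assms(1,2) show False by simp
  qed
  then show "a = bisector_shift X1 N t"
    using root unfolding bisector_shift_def by (simp add: field_simps)
qed

lemma rational_chord_parameter:
  fixes X1 Y1 N a r :: real
  assumes "X1 \<in> \<rat>" "Y1 \<in> \<rat>" "a \<in> \<rat>" "r \<in> \<rat>" "Y1 \<noteq> 0" "N = X1^2 + Y1^2"
    and conic: "4 * Y1^2 * r^2 = N * (Y1^2 + 4 * a^2)"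
  obtains t where "t \<in> \<rat>" "N * (2 * a - X1) * t^2 + 4 * N * t - 8 * a - 4 * X1 = 0"
proof (cases "2 * a = X1")
  case True
  have "N > 0"
    using assms(5,6) by (simp add: add_nonneg_pos)
  have "N * (2 * a - X1) = 0" "4 * N * (2 * X1 / N) = 8 * X1"
    using True \<open>N > 0\<close> by simp_all
  moreover have "2 * X1 / N \<in> \<rat>"
    using assms(1,2,6) by simp
  ultimately show ?thesis
    using True by (intro that[of "2 * X1 / N"]) simp_all
next
  case False
  define q where "q = N * (2 * a - X1)"
  have "q \<noteq> 0"
    using False assms(5,6) by (simp add: q_def add_nonneg_pos)
  \<comment> \<open>\<open>tN/2\<close> is the slope of the chord from \<open>(X\<^sub>1, N)\<close> to \<open>(2a, 2Y\<^sub>1r)\<close> on the conic\<close>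
  define t where "t = (4 * Y1 * r - 2 * N) / q"
  have qt: "q * t = 4 * Y1 * r - 2 * N"
    using \<open>q \<noteq> 0\<close> by (simp add: t_def)
  have "q * (q * t^2 + 4 * N * t - 8 * a - 4 * X1) = (q * t)^2 + 4 * N * (q * t) - (8 * a + 4 * X1) * q"
    by algebra
  also have "\<dots> = 0"
    unfolding qt unfolding q_def using conic assms(6) by algebra
  finally have "q * t^2 + 4 * N * t - 8 * a - 4 * X1 = 0"
    using \<open>q \<noteq> 0\<close> by simp
  moreover have "t \<in> \<rat>"
    using assms(1-4,6) by (simp add: t_def q_def)
  ultimately show ?thesis
    using that q_def by blast
qed

lemma bisector_apex_dist:
  fixes X1 Y1 N X Y t \<epsilon> :: real
  assumes "Y1 \<noteq> 0" "N = X1^2 + Y1^2" "t^2 * N \<noteq> 4" "\<epsilon> \<in> {1, -1}"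
    and X: "X = X1 / 2 + \<epsilon> * bisector_shift X1 N t" and Y: "Y = Y1 / 2 - X1 * (X - X1 / 2) / Y1"
  shows "sqrt (X^2 + Y^2) = \<bar>apex_radius X1 Y1 N t\<bar>"
    and "sqrt ((X - X1)^2 + (Y - Y1)^2) = \<bar>apex_radius X1 Y1 N t\<bar>"
proof -
  have "\<epsilon>^2 = 1"
    using assms(4) by auto
  note dist_sq = bisector_point_dist_sq[OF assms(1) X, of Y]
  have "Y = Y1 / 2 - X1 * (\<epsilon> * bisector_shift X1 N t) / Y1"
    using X Y by simp
  then show "sqrt (X^2 + Y^2) = \<bar>apex_radius X1 Y1 N t\<bar>"
    and "sqrt ((X - X1)^2 + (Y - Y1)^2) = \<bar>apex_radius X1 Y1 N t\<bar>"
    using dist_sq dist_sq_bisector_shift[OF assms(1-3) \<open>\<epsilon>^2 = 1\<close>] assms(2)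
    by (simp_all add: real_sqrt_abs)
qed

lemma bisector_apex_rational_iff:
  fixes X1 Y1 N X Y :: real
  assumes "X1 \<in> \<rat>" "Y1 \<in> \<rat>" "Y1 \<noteq> 0" "N = X1^2 + Y1^2"
  shows "(X \<in> \<rat> \<and> Y \<in> \<rat> \<and> Y = Y1 / 2 - X1 * (X - X1 / 2) / Y1 \<and> sqrt (X^2 + Y^2) \<in> \<rat>)
    \<longleftrightarrow> (\<exists>t \<in> \<rat>. \<exists>\<epsilon> \<in> {1, -1}. t^2 * N \<noteq> 4
          \<and> X = X1 / 2 + \<epsilon> * bisector_shift X1 N t \<and> Y = Y1 / 2 - X1 * (X - X1 / 2) / Y1)"
proof
  assume H: "X \<in> \<rat> \<and> Y \<in> \<rat> \<and> Y = Y1 / 2 - X1 * (X - X1 / 2) / Y1 \<and> sqrt (X^2 + Y^2) \<in> \<rat>"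
  define a where "a = X - X1 / 2"
  define r where "r = sqrt (X^2 + Y^2)"
  have "X = X1 / 2 + a" "Y = Y1 / 2 - X1 * a / Y1"
    using H by (simp_all add: a_def)
  then have "4 * Y1^2 * r^2 = N * (Y1^2 + 4 * a^2)"
    using bisector_point_dist_sq(1) assms(3,4) by (simp add: r_def)
  moreover have "a \<in> \<rat>"
    using H assms(1) by (simp add: a_def)
  moreover have "r \<in> \<rat>"
    unfolding r_def using H by blast
  ultimately obtain t where "t \<in> \<rat>" and root: "N * (2 * a - X1) * t^2 + 4 * N * t - 8 * a - 4 * X1 = 0"
    using rational_chord_parameter assms by metis
  with bisector_shift_of_root[OF assms(3,4) root] H show "\<exists>t \<in> \<rat>. \<exists>\<epsilon> \<in> {1, -1}. t^2 * N \<noteq> 4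
          \<and> X = X1 / 2 + \<epsilon> * bisector_shift X1 N t \<and> Y = Y1 / 2 - X1 * (X - X1 / 2) / Y1"
    by (auto simp: a_def)
next
  assume "\<exists>t \<in> \<rat>. \<exists>\<epsilon> \<in> {1, -1}. t^2 * N \<noteq> 4
          \<and> X = X1 / 2 + \<epsilon> * bisector_shift X1 N t \<and> Y = Y1 / 2 - X1 * (X - X1 / 2) / Y1"
  then obtain t \<epsilon> where "t \<in> \<rat>" "\<epsilon> \<in> {1, -1}" "t^2 * N \<noteq> 4"
    and X: "X = X1 / 2 + \<epsilon> * bisector_shift X1 N t" and Y: "Y = Y1 / 2 - X1 * (X - X1 / 2) / Y1"
    by blast
  have "N \<in> \<rat>" "\<epsilon> \<in> \<rat>"
    using assms(1,2,4) \<open>\<epsilon> \<in> {1, -1}\<close> by auto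
  then have "X \<in> \<rat>" "Y \<in> \<rat>" "apex_radius X1 Y1 N t \<in> \<rat>"
    using X Y assms(1,2) \<open>t \<in> \<rat>\<close> by (simp_all add: bisector_shift_def apex_radius_def)
  then show "X \<in> \<rat> \<and> Y \<in> \<rat> \<and> Y = Y1 / 2 - X1 * (X - X1 / 2) / Y1 \<and> sqrt (X^2 + Y^2) \<in> \<rat>"
    using bisector_apex_dist(1)[OF assms(3,4) \<open>t^2 * N \<noteq> 4\<close> \<open>\<epsilon> \<in> {1, -1}\<close> X Y] Y by simp
qed

lemma apex_formulas_eq:
  fixes X1 Y1 N X Y t \<epsilon> :: real
  assumes "Y1 \<noteq> 0" "t^2 * N \<noteq> 4"
  shows "(X = X1 / 2 + \<epsilon> * (t^2 * X1 * N - 4 * t * N + 4 * X1) / (2 * (t^2 * N - 4))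
          \<and> Y = Y1 / 2 + \<epsilon> * (X1 * (4 * t * N - t^2 * X1 * N - 4 * X1)) / (2 * Y1 * (t^2 * N - 4)))
    \<longleftrightarrow> (X = X1 / 2 + \<epsilon> * bisector_shift X1 N t \<and> Y = Y1 / 2 - X1 * (X - X1 / 2) / Y1)"
proof -
  have "t^2 * N - 4 \<noteq> 0"
    using assms(2) by simp
  then have "\<epsilon> * (X1 * (4 * t * N - t^2 * X1 * N - 4 * X1)) / (2 * Y1 * (t^2 * N - 4))
      = - X1 * (\<epsilon> * bisector_shift X1 N t) / Y1"
    using assms(1) by (simp add: bisector_shift_def field_simps)
  then show ?thesis
    by (auto simp: bisector_shift_def)
qed

theorem proposition1:
  fixes X1 Y1 X Y N :: real
  assumes "X1 \<in> \<rat>" and "Y1 \<in> \<rat>" and "(X1, Y1) \<noteq> (0, 0)" and "Y1 \<noteq> 0"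
    and N_def: "N = X1^2 + Y1^2"
  shows "((X \<in> \<rat> \<and> Y \<in> \<rat> \<and> Y = - (X1 / Y1) * X + N / (2 * Y1)
            \<and> sqrt (X^2 + Y^2) \<in> \<rat>)
         \<longleftrightarrow> (\<exists>t \<in> \<rat>. \<exists>\<epsilon> \<in> {1, -1::real}. t^2 * N \<noteq> 4
              \<and> X = X1 / 2 + \<epsilon> * (t^2 * X1 * N - 4 * t * N + 4 * X1) / (2 * (t^2 * N - 4))
              \<and> Y = Y1 / 2 + \<epsilon> * (X1 * (4 * t * N - t^2 * X1 * N - 4 * X1)) / (2 * Y1 * (t^2 * N - 4))))
    \<and> (\<forall>t \<in> \<rat>. \<forall>\<epsilon> \<in> {1, -1::real}. t^2 * N \<noteq> 4
              \<and> X = X1 / 2 + \<epsilon> * (t^2 * X1 * N - 4 * t * N + 4 * X1) / (2 * (t^2 * N - 4))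
              \<and> Y = Y1 / 2 + \<epsilon> * (X1 * (4 * t * N - t^2 * X1 * N - 4 * X1)) / (2 * Y1 * (t^2 * N - 4))
            \<longrightarrow> sqrt (X^2 + Y^2) = \<bar>((t * N - 2 * X1)^2 + 4 * Y1^2) / (2 * t^2 * Y1 * N - 8 * Y1)\<bar>
              \<and> sqrt ((X - X1)^2 + (Y - Y1)^2) = \<bar>((t * N - 2 * X1)^2 + 4 * Y1^2) / (2 * t^2 * Y1 * N - 8 * Y1)\<bar>)"
proof -
  note formulas = apex_formulas_eq[OF \<open>Y1 \<noteq> 0\<close>]
  have line: "Y = - (X1 / Y1) * X + N / (2 * Y1) \<longleftrightarrow> Y = Y1 / 2 - X1 * (X - X1 / 2) / Y1"
    using perpendicular_bisector_eq[OF \<open>Y1 \<noteq> 0\<close>] N_def by simp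
  have "(X \<in> \<rat> \<and> Y \<in> \<rat> \<and> Y = - (X1 / Y1) * X + N / (2 * Y1) \<and> sqrt (X^2 + Y^2) \<in> \<rat>)
    \<longleftrightarrow> (\<exists>t \<in> \<rat>. \<exists>\<epsilon> \<in> {1, -1}. t^2 * N \<noteq> 4
          \<and> X = X1 / 2 + \<epsilon> * bisector_shift X1 N t \<and> Y = Y1 / 2 - X1 * (X - X1 / 2) / Y1)"
    unfolding line by (rule bisector_apex_rational_iff[OF assms(1,2,4) N_def])
  also have "\<dots> \<longleftrightarrow> (\<exists>t \<in> \<rat>. \<exists>\<epsilon> \<in> {1, -1::real}. t^2 * N \<noteq> 4
              \<and> X = X1 / 2 + \<epsilon> * (t^2 * X1 * N - 4 * t * N + 4 * X1) / (2 * (t^2 * N - 4))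
              \<and> Y = Y1 / 2 + \<epsilon> * (X1 * (4 * t * N - t^2 * X1 * N - 4 * X1)) / (2 * Y1 * (t^2 * N - 4)))"
    by (intro bex_cong refl conj_cong[OF refl]) (metis formulas)
  moreover have "sqrt (X^2 + Y^2) = \<bar>apex_radius X1 Y1 N t\<bar>
      \<and> sqrt ((X - X1)^2 + (Y - Y1)^2) = \<bar>apex_radius X1 Y1 N t\<bar>"
    if "\<epsilon> \<in> {1, -1}" "t^2 * N \<noteq> 4"
      and "X = X1 / 2 + \<epsilon> * (t^2 * X1 * N - 4 * t * N + 4 * X1) / (2 * (t^2 * N - 4))"
      and "Y = Y1 / 2 + \<epsilon> * (X1 * (4 * t * N - t^2 * X1 * N - 4 * X1)) / (2 * Y1 * (t^2 * N - 4))"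
    for t \<epsilon> :: real
  proof -
    have "X = X1 / 2 + \<epsilon> * bisector_shift X1 N t \<and> Y = Y1 / 2 - X1 * (X - X1 / 2) / Y1"
      by (rule iffD1[OF formulas[OF that(2)]], intro conjI that(3,4))
    then show ?thesis
      by (intro conjI bisector_apex_dist[OF \<open>Y1 \<noteq> 0\<close> N_def that(2,1)]) simp_all
  qed
  ultimately show ?thesis
    unfolding apex_radius_def by (intro conjI) blast+
qed

end
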